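(* Let $n,d$ be integers with $1\le d<n$ and set $\bar k_i=\lfloor i(n+1)/(d+1)\rfloor$ for $i=1,\dots,d$. Then for $\bar\lambda_d=\binom{\bar k_d}{d}+\binom{\bar k_{d-1}}{d-1}+\cdots+\binom{\bar k_1}{1}$ we have $\delta_{n,d}(\bar\lambda_d)=\max_{0\le\lambda\le\binom nd}\delta_{n,d}(\lambda)$.
   Context: For integers $\lambda\ge0$ and $d\ge1$, $\lambda$ has a unique expansion $\lambda=\binom{k_d}{d}+\binom{k_{d-1}}{d-1}+\cdots+\binom{k_1}{1}$ with $k_d>k_{d-1}>\cdots>k_1\ge0$; define $\lambda^{[d]}=\binom{k_d}{d+1}+\binom{k_{d-1}}{d}+\cdots+\binom{k_1}{2}$. For $0\le\lambda\le\binom nd$ define $\delta_{n,d}(\lambda)=\frac{\lambda}{\binom nd}-\frac{\lambda^{[d]}}{\binom n{d+1}}$ (the difference between the linear bound and the Kruskal–Katona bound). *)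

theory Defs
  imports Complex_Main
begin

text \<open>d-cascade representation of lam: lam = sum_{i=1..d} (k_i choose i)
  with k_d > k_{d-1} > ... > k_1 >= 0 (only the values of k on {1..d} matter).\<close>
definition is_cascade :: "nat \<Rightarrow> nat \<Rightarrow> (nat \<Rightarrow> nat) \<Rightarrow> bool" where
  "is_cascade d lam k \<longleftrightarrow>
     (\<forall>i. 1 \<le> i \<longrightarrow> i < d \<longrightarrow> k i < k (Suc i)) \<and>
     lam = (\<Sum>i=1..d. k i choose i)"

text \<open>lam^[d] = sum_{i=1..d} (k_i choose (i+1)) for the (unique) cascade k of lam.\<close>
definition kk_upper :: "nat \<Rightarrow> nat \<Rightarrow> nat" where
  "kk_upper d lam = (let k = (SOME k. is_cascade d lam k) in (\<Sum>i=1..d. k i choose (i + 1)))"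

definition delta :: "nat \<Rightarrow> nat \<Rightarrow> nat \<Rightarrow> real" where
  "delta n d lam = real lam / real (n choose d) - real (kk_upper d lam) / real (n choose (d + 1))"

end

theory Submission
  imports Defs
begin

text \<open>
  If \<open>k\<close> is the \<open>d\<close>-cascade of \<open>\<lambda>\<close>, then \<open>\<delta>\<^sub>n\<^sub>,\<^sub>d(\<lambda>)\<close> splits into independent
  summands \<open>g\<^sub>i(k\<^sub>i) = (k\<^sub>i choose i) / (n choose d) - (k\<^sub>i choose (i+1)) / (n choose (d+1))\<close>.
  The increment \<open>g\<^sub>i(x+1) - g\<^sub>i(x)\<close> has the sign of \<open>i(n+1) - (x+1)(d+1)\<close>, so \<open>g\<^sub>i\<close> is
  unimodal with peak at \<open>\<lfloor>i(n+1)/(d+1)\<rfloor>\<close>.  These peaks are strictly increasing in \<open>i\<close> and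
  the last one is below \<open>n\<close>, so they form the cascade of some \<open>\<lambda> \<le> n choose d\<close>, which
  therefore maximises every summand simultaneously.
\<close>

definition cascade_sum :: "nat \<Rightarrow> (nat \<Rightarrow> nat) \<Rightarrow> nat" where
  "cascade_sum d k = (\<Sum>i=1..d. k i choose i)"

definition cascade_ordered :: "nat \<Rightarrow> (nat \<Rightarrow> nat) \<Rightarrow> bool" where
  "cascade_ordered d k \<longleftrightarrow> (\<forall>i. 1 \<le> i \<longrightarrow> i < d \<longrightarrow> k i < k (Suc i))"

lemma is_cascade_iff: "is_cascade d lam k \<longleftrightarrow> cascade_ordered d k \<and> lam = cascade_sum d k"
  by (simp add: is_cascade_def cascade_ordered_def cascade_sum_def)

lemma cascade_sum_Suc: "cascade_sum (Suc d) k = cascade_sum d k + (k (Suc d) choose Suc d)"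
  by (simp add: cascade_sum_def)

lemma cascade_ordered_Suc:
  "cascade_ordered (Suc d) k \<longleftrightarrow> cascade_ordered d k \<and> (1 \<le> d \<longrightarrow> k d < k (Suc d))"
  by (auto simp: cascade_ordered_def less_Suc_eq)

lemma cascade_sum_less_choose:
  assumes "cascade_ordered d k" and "1 \<le> d"
  shows "cascade_sum d k < Suc (k d) choose d"
  using assms
proof (induction d)
  case 0
  then show ?case by simp
next
  case (Suc d)
  show ?case
  proof (cases "d = 0")
    case True
    then show ?thesis by (simp add: cascade_sum_def)
  next
    case False
    with Suc.prems have ord: "cascade_ordered d k" and less: "k d < k (Suc d)"
      by (auto simp: cascade_ordered_Suc)
    have "cascade_sum d k < Suc (k d) choose d"
      using Suc.IH ord False by simp
    also have "\<dots> \<le> k (Suc d) choose d"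
      using less by (intro binomial_right_mono) simp
    finally show ?thesis by (simp add: cascade_sum_Suc)
  qed
qed

lemma cascade_top_unique:
  assumes "cascade_ordered d k" "cascade_ordered d k'" "1 \<le> d"
    and same: "cascade_sum d k = cascade_sum d k'"
  shows "k d = k' d"
proof (rule ccontr)
  assume "k d \<noteq> k' d"
  then consider "Suc (k d) \<le> k' d" | "Suc (k' d) \<le> k d"
    by linarith
  moreover have "k d choose d \<le> cascade_sum d k" "k' d choose d \<le> cascade_sum d k'"
    using assms(3) unfolding cascade_sum_def by (auto intro!: member_le_sum)
  moreover have "cascade_sum d k < Suc (k d) choose d" "cascade_sum d k' < Suc (k' d) choose d"
    using assms cascade_sum_less_choose by blast+
  ultimately show False
    using same binomial_right_mono[of _ _ d] by (cases; fastforce)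
qed

lemma cascade_unique:
  assumes "cascade_ordered d k" "cascade_ordered d k'"
    and "cascade_sum d k = cascade_sum d k'" and "i \<in> {1..d}"
  shows "k i = k' i"
  using assms
proof (induction d)
  case 0
  then show ?case by simp
next
  case (Suc d)
  have top: "k (Suc d) = k' (Suc d)"
    using cascade_top_unique[of "Suc d" k k'] Suc.prems(1-3) by simp
  with Suc.prems(1-3) have "cascade_ordered d k" "cascade_ordered d k'"
    "cascade_sum d k = cascade_sum d k'"
    by (simp_all add: cascade_ordered_Suc cascade_sum_Suc)
  with Suc.IH Suc.prems(4) top show ?case
    by (cases "i = Suc d") auto
qed

lemma cascade_exists_below:
  assumes "lam < m choose d"
  shows "\<exists>k. cascade_ordered d k \<and> cascade_sum d k = lam \<and> (1 \<le> d \<longrightarrow> k d < m)"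
  using assms
proof (induction d arbitrary: lam m)
  case 0
  then show ?case by (auto simp: cascade_ordered_def cascade_sum_def)
next
  case (Suc d)
  define K where "K = {x. x < m \<and> (x choose Suc d) \<le> lam}"
  define top where "top = Max K"
  have "d < m"
    using Suc.prems binomial_eq_0[of m "Suc d"] by (cases "d < m") auto
  then have "d \<in> K"
    by (simp add: K_def binomial_eq_0)
  moreover have "finite K"
    by (simp add: K_def)
  ultimately have "top \<in> K" and top_max: "\<And>x. x \<in> K \<Longrightarrow> x \<le> top"
    unfolding top_def by (auto intro: Max_in Max_ge)
  then have top_less: "top < m" and top_le: "top choose Suc d \<le> lam"
    by (auto simp: K_def)
  have "lam < Suc top choose Suc d"
  proof (cases "Suc top < m")
    case True
    with top_max[of "Suc top"] show ?thesis by (force simp: K_def)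
  next
    case False
    with top_less have "m = Suc top"
      by simp
    with Suc.prems show ?thesis
      by simp
  qed
  with top_le have "lam - (top choose Suc d) < top choose d"
    by simp
  from Suc.IH[OF this] obtain k where k: "cascade_ordered d k"
    "cascade_sum d k = lam - (top choose Suc d)" "1 \<le> d \<longrightarrow> k d < top"
    by blast
  define k' where "k' = k(Suc d := top)"
  have "cascade_sum d k' = cascade_sum d k"
    unfolding cascade_sum_def k'_def by (rule sum.cong) auto
  with k(2) top_le have "cascade_sum (Suc d) k' = lam"
    by (simp add: cascade_sum_Suc k'_def)
  moreover have "cascade_ordered (Suc d) k'"
    using k(1,3) by (simp add: cascade_ordered_def cascade_ordered_Suc k'_def)
  ultimately show ?case
    using top_less by (auto simp: k'_def)
qed

lemma less_add_choose:
  assumes "1 \<le> d"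
  shows "lam < (lam + d) choose d"
  using assms
proof (induction d)
  case 0
  then show ?case by simp
next
  case (Suc d)
  then show ?case
    by (cases "d = 0") auto
qed

lemma is_cascade_exists:
  assumes "1 \<le> d"
  shows "\<exists>k. is_cascade d lam k"
  using cascade_exists_below[OF less_add_choose[OF assms, of lam]] by (auto simp: is_cascade_iff)

lemma kk_upper_cascade:
  assumes "is_cascade d lam k"
  shows "kk_upper d lam = (\<Sum>i=1..d. k i choose (i + 1))"
proof -
  define k0 where "k0 = (SOME k. is_cascade d lam k)"
  have "is_cascade d lam k0"
    unfolding k0_def by (rule someI[where P = "is_cascade d lam", OF assms])
  with assms have "\<And>i. i \<in> {1..d} \<Longrightarrow> k0 i = k i"
    by (auto simp: is_cascade_iff intro: cascade_unique)
  then show ?thesis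
    unfolding kk_upper_def k0_def[symmetric] Let_def by (auto intro!: sum.cong)
qed

definition delta_summand :: "nat \<Rightarrow> nat \<Rightarrow> nat \<Rightarrow> nat \<Rightarrow> real" where
  "delta_summand n d i x =
     real (x choose i) / real (n choose d) - real (x choose (i + 1)) / real (n choose (d + 1))"

lemma delta_eq_sum_delta_summand:
  assumes "is_cascade d lam k"
  shows "delta n d lam = (\<Sum>i=1..d. delta_summand n d i (k i))"
proof -
  have "lam = (\<Sum>i=1..d. k i choose i)"
    using assms by (simp add: is_cascade_def)
  then show ?thesis
    unfolding delta_def kk_upper_cascade[OF assms] delta_summand_def
    by (simp add: of_nat_sum sum_divide_distrib sum_subtractf)
qed

lemma Suc_times_binomial_Suc: "Suc k * (n choose Suc k) = (n - k) * (n choose k)"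
proof (cases n)
  case (Suc m)
  then show ?thesis
    using Suc_times_binomial[of k m] binomial_absorb_comp[of n k] by simp
qed simp

lemma delta_summand_Suc_diff:
  assumes "d < n"
  shows "delta_summand n d (Suc j) (Suc x) - delta_summand n d (Suc j) x =
    real (x choose j) * (real (Suc j * (n + 1)) - real (Suc x * (d + 1)))
      / (real (n choose (d + 1)) * real (d + 1) * real (Suc j))"
proof (cases "j \<le> x")
  case False
  then show ?thesis
    by (simp add: delta_summand_def binomial_eq_0)
next
  case True
  define A B c0 c1 where "A = real (n choose d)" and "B = real (n choose (d + 1))"
    and "c0 = real (x choose j)" and "c1 = real (x choose Suc j)"
  have "A > 0" "B > 0"
    using assms by (simp_all add: A_def B_def)
  have c1: "real (Suc j) * c1 = (real x - real j) * c0"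
    using Suc_times_binomial_Suc[of j x] True unfolding c0_def c1_def
    by (metis of_nat_diff of_nat_mult)
  have "real (Suc d) * B = (real n - real d) * A"
    using Suc_times_binomial_Suc[of d n] assms unfolding A_def B_def
    by (metis Suc_eq_plus1 less_imp_le of_nat_diff of_nat_mult)
  then have B: "real (d + 1) * B / A = real n - real d"
    using \<open>A > 0\<close> by (simp add: divide_simps)
  have "(c0 / A - c1 / B) * (B * real (d + 1) * real (Suc j))
      = c0 * (real (d + 1) * B / A) * real (Suc j) - (real (Suc j) * c1) * real (d + 1)"
    using \<open>A > 0\<close> \<open>B > 0\<close> by (simp add: field_simps)
  also have "\<dots> = c0 * (real (Suc j * (n + 1)) - real (Suc x * (d + 1)))"
    unfolding B c1 by (simp add: algebra_simps)
  finally have "c0 / A - c1 / B = c0 * (real (Suc j * (n + 1)) - real (Suc x * (d + 1)))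
      / (B * real (d + 1) * real (Suc j))"
    using \<open>B > 0\<close> by (simp add: eq_divide_eq)
  moreover have "delta_summand n d (Suc j) (Suc x) - delta_summand n d (Suc j) x = c0 / A - c1 / B"
    unfolding delta_summand_def A_def B_def c0_def c1_def by (simp add: add_divide_distrib)
  ultimately show ?thesis
    by (simp add: B_def c0_def)
qed

lemma le_at_peak:
  fixes h :: "nat \<Rightarrow> 'a::preorder"
  assumes up: "\<And>y. y < p \<Longrightarrow> h y \<le> h (Suc y)"
    and down: "\<And>y. p \<le> y \<Longrightarrow> h (Suc y) \<le> h y"
  shows "h x \<le> h p"
proof (cases "x \<le> p")
  case True
  then show ?thesis
  proof (induction rule: inc_induct)
    case (step y)
    with up show ?case by (blast intro: order_trans)
  qed simp
next
  case False
  then have "p \<le> x" by simp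
  then show ?thesis
  proof (induction rule: dec_induct)
    case (step y)
    with down show ?case by (blast intro: order_trans)
  qed simp
qed

lemma delta_summand_le_peak:
  assumes "d < n" and "1 \<le> i"
  shows "delta_summand n d i x \<le> delta_summand n d i (i * (n + 1) div (d + 1))"
proof -
  obtain j where i: "i = Suc j"
    using assms(2) by (cases i) auto
  let ?p = "i * (n + 1) div (d + 1)"
  have denom: "real (n choose (d + 1)) * real (d + 1) * real (Suc j) > 0"
    using assms(1) by simp
  show ?thesis
  proof (rule le_at_peak)
    fix y assume "y < ?p"
    then have "Suc y * (d + 1) \<le> Suc j * (n + 1)"
      unfolding i by (subst less_eq_div_iff_mult_less_eq[symmetric]) simp_all
    then have "real (Suc y * (d + 1)) \<le> real (Suc j * (n + 1))"
      by (rule of_nat_mono)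
    then have "0 \<le> delta_summand n d (Suc j) (Suc y) - delta_summand n d (Suc j) y"
      unfolding delta_summand_Suc_diff[OF assms(1)] using denom
      by (intro divide_nonneg_pos mult_nonneg_nonneg) simp_all
    then show "delta_summand n d i y \<le> delta_summand n d i (Suc y)"
      by (simp add: i)
  next
    fix y assume "?p \<le> y"
    then have "Suc j * (n + 1) < Suc y * (d + 1)"
      unfolding i by (subst div_less_iff_less_mult[symmetric]) simp_all
    then have "real (Suc j * (n + 1)) \<le> real (Suc y * (d + 1))"
      by (intro of_nat_mono less_imp_le)
    then have "delta_summand n d (Suc j) (Suc y) - delta_summand n d (Suc j) y \<le> 0"
      unfolding delta_summand_Suc_diff[OF assms(1)] using denom
      by (intro divide_nonpos_pos mult_nonneg_nonpos) simp_all
    then show "delta_summand n d i (Suc y) \<le> delta_summand n d i y"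
      by (simp add: i)
  qed
qed

lemma mult_div_less_Suc_mult_div:
  fixes a b :: nat
  assumes "0 < b" and "b \<le> a"
  shows "i * a div b < Suc i * a div b"
proof -
  have "i * a div b < (i * a + b) div b"
    using assms(1) by simp
  also have "\<dots> \<le> Suc i * a div b"
    using assms(2) by (intro div_le_mono) simp
  finally show ?thesis .
qed

theorem proposition5p3:
  fixes n d :: nat
  assumes "1 \<le> d" and "d < n"
  defines "kbar \<equiv> (\<lambda>i. (i * (n + 1)) div (d + 1))"
  defines "lambar \<equiv> (\<Sum>i=1..d. kbar i choose i)"
  shows "delta n d lambar = Max {delta n d lam | lam. lam \<le> n choose d}"
proof -
  have ordered: "cascade_ordered d kbar"
    unfolding cascade_ordered_def kbar_def
    using mult_div_less_Suc_mult_div[of "d + 1" "n + 1"] assms(2) by simp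
  then have cascade: "is_cascade d lambar kbar"
    by (simp add: is_cascade_iff cascade_sum_def lambar_def)
  have "kbar d < n"
    using assms(2) by (simp add: kbar_def div_less_iff_less_mult algebra_simps)
  then have "Suc (kbar d) choose d \<le> n choose d"
    by (intro binomial_right_mono) simp
  with cascade_sum_less_choose[OF ordered assms(1)] have lambar_le: "lambar \<le> n choose d"
    by (simp add: cascade_sum_def lambar_def)
  have "delta n d lam \<le> delta n d lambar" for lam
  proof -
    obtain k where k: "is_cascade d lam k"
      using is_cascade_exists[OF assms(1)] by blast
    have "delta n d lam = (\<Sum>i=1..d. delta_summand n d i (k i))"
      using k by (rule delta_eq_sum_delta_summand)
    also have "\<dots> \<le> (\<Sum>i=1..d. delta_summand n d i (kbar i))"
      unfolding kbar_def using assms(2) by (intro sum_mono delta_summand_le_peak) auto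
    also have "\<dots> = delta n d lambar"
      using cascade by (rule delta_eq_sum_delta_summand[symmetric])
    finally show ?thesis .
  qed
  moreover have "{delta n d lam | lam. lam \<le> n choose d} = delta n d ` {..n choose d}"
    by auto
  ultimately show ?thesis
    using lambar_le by (intro Max_eqI[symmetric]) auto
qed

end
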